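(* Let $F$ be a field with $\mathrm{char}\,F\neq 2$ and let $n>1$ be an integer. Let $I_n$ be the $F$-algebra defined in the context. Then the automorphism group of $I_n$ is isomorphic to the orthogonal group $O_{n-1}(F)=\{A\in M_{n-1}(F)\mid AA^T=A^TA=E\}$, and the Lie algebra of derivations of $I_n$ is isomorphic to the orthogonal Lie algebra $\mathfrak{o}_{n-1}(F)=\{A\in M_{n-1}(F)\mid A^T=-A\}$.
   Context: $I_n$ denotes the $n$-dimensional (non-associative) algebra over $F$ with basis $e_1,\ldots,e_n$ and multiplication given by $e_n\cdot e_n=2e_n$, $e_n\cdot e_j=e_j$, $e_j\cdot e_j=e_n$ for $j=1,\ldots,n-1$, with all other products of basis elements equal to zero (extended bilinearly). It is a pre-Lie algebra, i.e. $(xy)z-x(yz)=(yx)z-y(xz)$ for all $x,y,z$. A derivation is a linear map $d$ with $d(xy)=d(x)y+xd(y)$. $E$ denotes the identity matrix. *)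

theory Defs
  imports "Jordan_Normal_Form.Matrix" "HOL-Algebra.Group"
begin

text \<open>Structure constants of I_n w.r.t. the basis e_1,...,e_n, indexed 0-based:
  e_(i+1) has index i, so the distinguished element e_n has index n-1.
  ic n i j k is the coefficient of e_k in e_i * e_j.\<close>
definition ic :: "nat \<Rightarrow> nat \<Rightarrow> nat \<Rightarrow> nat \<Rightarrow> 'a::field" where
  "ic n i j k =
     (if i = n - 1 \<and> j = n - 1 then (if k = n - 1 then 2 else 0)
      else if i = n - 1 \<and> j < n - 1 then (if k = j then 1 else 0)
      else if i < n - 1 \<and> j = i then (if k = n - 1 then 1 else 0)
      else 0)"

definition imul :: "nat \<Rightarrow> 'a::field vec \<Rightarrow> 'a vec \<Rightarrow> 'a vec" where
  "imul n x y = vec n (\<lambda>k. \<Sum>i<n. \<Sum>j<n. x $ i * y $ j * ic n i j k)"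

definition is_aut :: "nat \<Rightarrow> 'a::field mat \<Rightarrow> bool" where
  "is_aut n A \<longleftrightarrow> A \<in> carrier_mat n n \<and> invertible_mat A \<and>
     (\<forall>x \<in> carrier_vec n. \<forall>y \<in> carrier_vec n. A *\<^sub>v imul n x y = imul n (A *\<^sub>v x) (A *\<^sub>v y))"

definition is_der :: "nat \<Rightarrow> 'a::field mat \<Rightarrow> bool" where
  "is_der n D \<longleftrightarrow> D \<in> carrier_mat n n \<and>
     (\<forall>x \<in> carrier_vec n. \<forall>y \<in> carrier_vec n.
        D *\<^sub>v imul n x y = imul n (D *\<^sub>v x) y + imul n x (D *\<^sub>v y))"

definition aut_group :: "nat \<Rightarrow> 'a::field mat monoid" where
  "aut_group n = \<lparr>carrier = {A. is_aut n A}, mult = (\<lambda>A B. A * B), one = 1\<^sub>m n\<rparr>"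

definition orth_group :: "nat \<Rightarrow> 'a::field mat monoid" where
  "orth_group m = \<lparr>carrier = {A \<in> carrier_mat m m. A * transpose_mat A = 1\<^sub>m m \<and> transpose_mat A * A = 1\<^sub>m m},
                   mult = (\<lambda>A B. A * B), one = 1\<^sub>m m\<rparr>"

definition der_alg :: "nat \<Rightarrow> 'a::field mat set" where
  "der_alg n = {D. is_der n D}"

definition orth_lie :: "nat \<Rightarrow> 'a::field mat set" where
  "orth_lie m = {A \<in> carrier_mat m m. transpose_mat A = - A}"

definition lie_bracket :: "'a::field mat \<Rightarrow> 'a mat \<Rightarrow> 'a mat" where
  "lie_bracket A B = A * B - B * A"

definition lie_isomorphic :: "'a::field mat set \<Rightarrow> 'a mat set \<Rightarrow> bool" where
  "lie_isomorphic L M \<longleftrightarrow> (\<exists>\<phi>. bij_betw \<phi> L M \<and>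
     (\<forall>A \<in> L. \<forall>B \<in> L. \<phi> (A + B) = \<phi> A + \<phi> B \<and>
                        \<phi> (lie_bracket A B) = lie_bracket (\<phi> A) (\<phi> B)) \<and>
     (\<forall>c. \<forall>A \<in> L. \<phi> (c \<cdot>\<^sub>m A) = c \<cdot>\<^sub>m \<phi> A))"

end

theory Submission
  imports Defs "Jordan_Normal_Form.Determinant"
begin

text \<open>Let e = e_n be the distinguished basis vector and x \<bullet> y = \<Sum> x_i y_i the standard
  bilinear form. In coordinates the product of I_n is x y = x_e y + (x \<bullet> y) e, where x_e is the
  e-coordinate of x. An automorphism A must fix e: otherwise A maps e_1 and e = e_1 e_1 into the
  line of e, and e e = 2 e together with char F \<noteq> 2 forces A e = 0. Comparing e-coordinates in
  A (x y) = (A x) (A y) then shows that A preserves the bilinear form. So the automorphisms are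
  exactly the orthogonal matrices fixing e, i.e. diag(Q, 1) with Q orthogonal, and in the same way
  the derivations are exactly the skew matrices killing e, i.e. diag(Q, 0) with Q skew. Taking
  the upper left block Q gives both isomorphisms.\<close>

section \<open>Orthogonal and skew-symmetric matrices\<close>

lemma mult_mat_vec_unit_vec:
  fixes A :: "'a::semiring_1 mat"
  assumes "A \<in> carrier_mat nr n" "j < n"
  shows "A *\<^sub>v unit_vec n j = col A j"
  using assms by (intro eq_vecI) auto

lemma transpose_mult_self_eq_one_if_scalar_prod_preserved:
  fixes A :: "'a::comm_ring_1 mat"
  assumes A: "A \<in> carrier_mat n n"
    and preserved: "\<And>x y. x \<in> carrier_vec n \<Longrightarrow> y \<in> carrier_vec n \<Longrightarrow> (A *\<^sub>v x) \<bullet> (A *\<^sub>v y) = x \<bullet> y"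
  shows "transpose_mat A * A = 1\<^sub>m n"
proof (rule eq_matI)
  fix i j assume "i < dim_row (1\<^sub>m n :: 'a mat)" "j < dim_col (1\<^sub>m n :: 'a mat)"
  then have i: "i < n" and j: "j < n" by auto
  have "(transpose_mat A * A) $$ (i, j) = (A *\<^sub>v unit_vec n i) \<bullet> (A *\<^sub>v unit_vec n j)"
    using A i j by (simp add: mult_mat_vec_unit_vec)
  also have "\<dots> = unit_vec n i \<bullet> unit_vec n j"
    by (rule preserved) auto
  finally show "(transpose_mat A * A) $$ (i, j) = 1\<^sub>m n $$ (i, j)"
    using i j by auto
qed (use A in auto)

lemma transpose_eq_uminus_if_scalar_prod_skew:
  fixes D :: "'a::comm_ring_1 mat"
  assumes D: "D \<in> carrier_mat n n"
    and skew: "\<And>x y. x \<in> carrier_vec n \<Longrightarrow> y \<in> carrier_vec n \<Longrightarrow> (D *\<^sub>v x) \<bullet> y + x \<bullet> (D *\<^sub>v y) = 0"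
  shows "transpose_mat D = - D"
proof (rule eq_matI)
  fix i j assume "i < dim_row (- D)" "j < dim_col (- D)"
  then have i: "i < n" and j: "j < n" using D by auto
  have "D $$ (i, j) + D $$ (j, i) = 0"
    using skew[of "unit_vec n j" "unit_vec n i"] D i j by (simp add: mult_mat_vec_unit_vec)
  then show "transpose_mat D $$ (i, j) = (- D) $$ (i, j)"
    using D i j by (simp add: eq_neg_iff_add_eq_0 add.commute)
qed (use D in auto)

lemma invertible_mat_mult_vec_eq_zero:
  fixes A :: "'a::semiring_1 mat"
  assumes inv: "invertible_mat A" and A: "A \<in> carrier_mat n n"
    and x: "x \<in> carrier_vec n" and Ax: "A *\<^sub>v x = 0\<^sub>v n"
  shows "x = 0\<^sub>v n"
proof -
  obtain B where AB: "A * B = 1\<^sub>m n" and BA: "B * A = 1\<^sub>m (dim_row B)"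
    using inv A unfolding invertible_mat_def inverts_mat_def by auto
  have B: "B \<in> carrier_mat n n"
    using arg_cong[OF AB, of dim_col] arg_cong[OF BA, of dim_col] A by auto
  have "x = (B * A) *\<^sub>v x" using BA B x by simp
  also have "\<dots> = B *\<^sub>v (A *\<^sub>v x)" using A B x by simp
  also have "\<dots> = 0\<^sub>v n" using Ax B by (intro eq_vecI) auto
  finally show ?thesis .
qed

section \<open>Block matrices diag(Q, c)\<close>

definition block_ext :: "'a::zero mat \<Rightarrow> 'a \<Rightarrow> 'a mat" where
  "block_ext Q c = four_block_mat Q (0\<^sub>m (dim_row Q) 1) (0\<^sub>m 1 (dim_col Q)) (mat 1 1 (\<lambda>_. c))"

definition upper_left_block :: "nat \<Rightarrow> 'a mat \<Rightarrow> 'a mat" where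
  "upper_left_block m A = mat m m (\<lambda>ij. A $$ ij)"

lemma dim_block_ext [simp]:
  "dim_row (block_ext Q c) = Suc (dim_row Q)" "dim_col (block_ext Q c) = Suc (dim_col Q)"
  by (simp_all add: block_ext_def)

lemma block_ext_carrier [simp]:
  "Q \<in> carrier_mat m m \<Longrightarrow> block_ext Q c \<in> carrier_mat (Suc m) (Suc m)"
  by (intro carrier_matI) auto

lemma index_block_ext:
  assumes "i < Suc (dim_row Q)" "j < Suc (dim_col Q)"
  shows "block_ext Q c $$ (i, j) =
    (if i < dim_row Q \<and> j < dim_col Q then Q $$ (i, j)
     else if i = dim_row Q \<and> j = dim_col Q then c else 0)"
  using assms by (auto simp: block_ext_def)

lemma upper_left_block_carrier [simp]: "upper_left_block m A \<in> carrier_mat m m"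
  by (simp add: upper_left_block_def)

lemma upper_left_block_block_ext [simp]:
  "Q \<in> carrier_mat m m \<Longrightarrow> upper_left_block m (block_ext Q c) = Q"
  by (intro eq_matI) (auto simp: upper_left_block_def index_block_ext)

lemma block_ext_inject:
  assumes "block_ext Q c = block_ext R d" "Q \<in> carrier_mat m m" "R \<in> carrier_mat m m"
  shows "Q = R"
  using assms by (metis upper_left_block_block_ext)

lemma mult_block_ext:
  fixes Q R :: "'a::comm_ring_1 mat"
  assumes "Q \<in> carrier_mat m m" "R \<in> carrier_mat m m"
  shows "block_ext Q c * block_ext R d = block_ext (Q * R) (c * d)"
proof -
  have "mat 1 1 (\<lambda>_. c) * mat 1 1 (\<lambda>_. d) = mat 1 1 (\<lambda>_. c * d)"
    by (intro eq_matI) (auto simp: scalar_prod_def)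
  with assms show ?thesis
    unfolding block_ext_def by (subst mult_four_block_mat) auto
qed

lemma add_block_ext:
  fixes Q R :: "'a::monoid_add mat"
  assumes "Q \<in> carrier_mat m m" "R \<in> carrier_mat m m"
  shows "block_ext Q c + block_ext R d = block_ext (Q + R) (c + d)"
  using assms unfolding block_ext_def by (subst add_four_block_mat) auto

lemma minus_block_ext:
  fixes Q R :: "'a::ab_group_add mat"
  assumes "Q \<in> carrier_mat m m" "R \<in> carrier_mat m m"
  shows "block_ext Q c - block_ext R d = block_ext (Q - R) (c - d)"
  using assms by (intro eq_matI) (auto simp: index_block_ext)

lemma uminus_block_ext:
  fixes Q :: "'a::ab_group_add mat"
  assumes "Q \<in> carrier_mat m m"
  shows "- block_ext Q c = block_ext (- Q) (- c)"
  using assms by (intro eq_matI) (auto simp: index_block_ext)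

lemma smult_block_ext:
  fixes Q :: "'a::semiring_0 mat"
  assumes "Q \<in> carrier_mat m m"
  shows "a \<cdot>\<^sub>m block_ext Q c = block_ext (a \<cdot>\<^sub>m Q) (a * c)"
  using assms unfolding block_ext_def by (subst smult_four_block_mat) auto

lemma transpose_block_ext:
  assumes "Q \<in> carrier_mat m m"
  shows "transpose_mat (block_ext Q c) = block_ext (transpose_mat Q) c"
  using assms unfolding block_ext_def by (subst transpose_four_block_mat) auto

lemma block_ext_one: "block_ext (1\<^sub>m m) 1 = (1\<^sub>m (Suc m) :: 'a::zero_neq_one mat)"
  by (intro eq_matI) (auto simp: index_block_ext)

lemma block_ext_mult_unit_vec:
  fixes Q :: "'a::semiring_1 mat"
  assumes "Q \<in> carrier_mat m m"
  shows "block_ext Q c *\<^sub>v unit_vec (Suc m) m = c \<cdot>\<^sub>v unit_vec (Suc m) m"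
  using assms by (intro eq_vecI) (auto simp: index_block_ext)

lemma block_ext_upper_left_block:
  fixes A :: "'a::semiring_1 mat"
  assumes A: "A \<in> carrier_mat (Suc m) (Suc m)"
    and col: "A *\<^sub>v unit_vec (Suc m) m = c \<cdot>\<^sub>v unit_vec (Suc m) m"
    and row: "transpose_mat A *\<^sub>v unit_vec (Suc m) m = c \<cdot>\<^sub>v unit_vec (Suc m) m"
  shows "block_ext (upper_left_block m A) c = A"
proof (rule eq_matI)
  fix i j assume "i < dim_row A" "j < dim_col A"
  then have i: "i < Suc m" and j: "j < Suc m" using A by auto
  have "A $$ (i, m) = c * of_bool (i = m)"
    using arg_cong[OF col, of "\<lambda>v. v $ i"] A i by simp
  moreover have "A $$ (m, j) = c * of_bool (j = m)"
    using arg_cong[OF row, of "\<lambda>v. v $ j"] A j by simp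
  ultimately show "block_ext (upper_left_block m A) c $$ (i, j) = A $$ (i, j)"
    using i j by (auto simp: index_block_ext upper_left_block_def less_Suc_eq)
qed (use A in \<open>auto simp: upper_left_block_def\<close>)

lemma bij_betw_upper_left_block:
  assumes "S \<subseteq> carrier_mat m m"
  shows "bij_betw (upper_left_block m) ((\<lambda>Q. block_ext Q c) ` S) S"
  by (rule bij_betw_byWitness[where f' = "\<lambda>Q. block_ext Q c"]) (use assms in auto)

section \<open>The multiplication of I_n\<close>

lemma ic_Suc_eq:
  assumes "i < Suc m" "j < Suc m"
  shows "ic (Suc m) i j k = (of_bool (i = m \<and> j = k) + of_bool (i = j \<and> k = m) :: 'a::field)"
  using assms by (auto simp: ic_def)

lemma imul_eq:
  fixes x y :: "'a::field vec"
  assumes x: "x \<in> carrier_vec (Suc m)" and y: "y \<in> carrier_vec (Suc m)"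
  shows "imul (Suc m) x y = x $ m \<cdot>\<^sub>v y + (x \<bullet> y) \<cdot>\<^sub>v unit_vec (Suc m) m"
proof (rule eq_vecI)
  fix k assume "k < dim_vec (x $ m \<cdot>\<^sub>v y + (x \<bullet> y) \<cdot>\<^sub>v unit_vec (Suc m) m)"
  then have k: "k < Suc m" by simp
  have "imul (Suc m) x y $ k
      = (\<Sum>i<Suc m. \<Sum>j<Suc m. x $ i * y $ j * (of_bool (i = m \<and> j = k) + of_bool (i = j \<and> k = m)))"
    using k by (simp add: imul_def ic_Suc_eq)
  also have "\<dots> = x $ m * y $ k + (\<Sum>i<Suc m. x $ i * y $ i) * of_bool (k = m)"
    using k by (simp add: distrib_left sum.distrib sum_distrib_right if_distrib cong: if_cong)
  finally show "imul (Suc m) x y $ k = (x $ m \<cdot>\<^sub>v y + (x \<bullet> y) \<cdot>\<^sub>v unit_vec (Suc m) m) $ k"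
    using k x y by (simp add: scalar_prod_def atLeast0LessThan)
qed (simp add: imul_def y)

lemma mult_mat_vec_imul:
  fixes A :: "'a::field mat"
  assumes "A \<in> carrier_mat n (Suc m)" "x \<in> carrier_vec (Suc m)" "y \<in> carrier_vec (Suc m)"
  shows "A *\<^sub>v imul (Suc m) x y = x $ m \<cdot>\<^sub>v (A *\<^sub>v y) + (x \<bullet> y) \<cdot>\<^sub>v (A *\<^sub>v unit_vec (Suc m) m)"
  using assms by (simp add: imul_eq mult_add_distrib_mat_vec mult_mat_vec)

section \<open>Automorphisms\<close>

lemma is_aut_imul_index:
  fixes A :: "'a::field mat"
  assumes aut: "is_aut (Suc m) A"
    and x: "x \<in> carrier_vec (Suc m)" and y: "y \<in> carrier_vec (Suc m)" and k: "k < Suc m"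
  shows "x $ m * (A *\<^sub>v y) $ k + (x \<bullet> y) * (A *\<^sub>v unit_vec (Suc m) m) $ k
       = (A *\<^sub>v x) $ m * (A *\<^sub>v y) $ k + ((A *\<^sub>v x) \<bullet> (A *\<^sub>v y)) * unit_vec (Suc m) m $ k"
proof -
  have A: "A \<in> carrier_mat (Suc m) (Suc m)" using aut by (simp add: is_aut_def)
  have "x $ m \<cdot>\<^sub>v (A *\<^sub>v y) + (x \<bullet> y) \<cdot>\<^sub>v (A *\<^sub>v unit_vec (Suc m) m) = A *\<^sub>v imul (Suc m) x y"
      (is "?lhs = _")
    using A x y by (simp add: mult_mat_vec_imul)
  also have "\<dots> = imul (Suc m) (A *\<^sub>v x) (A *\<^sub>v y)"
    using aut x y by (simp add: is_aut_def)
  also have "\<dots> = (A *\<^sub>v x) $ m \<cdot>\<^sub>v (A *\<^sub>v y) + ((A *\<^sub>v x) \<bullet> (A *\<^sub>v y)) \<cdot>\<^sub>v unit_vec (Suc m) m"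
      (is "_ = ?rhs")
    using A x y by (intro imul_eq) auto
  finally have "?lhs = ?rhs" .
  from arg_cong[OF this, of "\<lambda>w. w $ k"] show ?thesis
    using A x y k by (simp del: index_mult_mat_vec)
qed

lemma is_aut_corner_entry:
  fixes A :: "'a::field mat"
  assumes two: "(2::'a) \<noteq> 0" and m: "0 < m" and aut: "is_aut (Suc m) A"
  shows "A $$ (m, m) = 1"
proof (rule ccontr)
  let ?e = "unit_vec (Suc m)"
  define v where "v = A *\<^sub>v ?e m"
  assume "A $$ (m, m) \<noteq> 1"
  moreover have A: "A \<in> carrier_mat (Suc m) (Suc m)" and inv: "invertible_mat A"
    using aut by (auto simp: is_aut_def)
  ultimately have ne: "v $ m \<noteq> 1" by (simp add: v_def)
  have v: "v \<in> carrier_vec (Suc m)" using A by (simp add: v_def)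
  have "(A *\<^sub>v ?e 0) $ k = 0" if "k < m" for k
    using is_aut_imul_index[OF aut _ _ less_SucI[OF that], of "?e m" "?e 0"] A m that ne
    by (simp add: v_def del: index_mult_mat_vec)
  then have "v $ k = 0" if "k < m" for k
    using is_aut_imul_index[OF aut _ _ less_SucI[OF that], of "?e 0" "?e 0"] A m that
    by (simp add: v_def del: index_mult_mat_vec)
  then have line: "v = v $ m \<cdot>\<^sub>v ?e m"
    using v by (intro eq_vecI) (auto simp: less_Suc_eq)
  have "v \<bullet> v = v \<bullet> (v $ m \<cdot>\<^sub>v ?e m)" using arg_cong[OF line, of "\<lambda>w. v \<bullet> w"] .
  also have "\<dots> = v $ m * v $ m" using v by simp
  finally have "v $ m + v $ m = v $ m * v $ m + v $ m * v $ m"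
    using is_aut_imul_index[OF aut _ _ lessI, of "?e m" "?e m"] by (simp add: v_def del: index_mult_mat_vec)
  then have "2 * v $ m = 2 * (v $ m * v $ m)" by (metis mult_2)
  then have "v $ m = 0" using two ne by simp
  then have "A *\<^sub>v ?e m = 0\<^sub>v (Suc m)"
    using line v by (intro eq_vecI) (auto simp: v_def)
  then show False
    using invertible_mat_mult_vec_eq_zero[OF inv A] by (metis unit_vec_carrier unit_vec_nonzero lessI)
qed

lemma is_aut_mult_unit_vec:
  fixes A :: "'a::field mat"
  assumes two: "(2::'a) \<noteq> 0" and m: "0 < m" and aut: "is_aut (Suc m) A"
  shows "A *\<^sub>v unit_vec (Suc m) m = unit_vec (Suc m) m"
proof -
  let ?e = "unit_vec (Suc m) m"
  define v where "v = A *\<^sub>v ?e"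
  have A: "A \<in> carrier_mat (Suc m) (Suc m)" using aut by (simp add: is_aut_def)
  then have v: "v \<in> carrier_vec (Suc m)" by (simp add: v_def)
  have vm: "v $ m = 1" using is_aut_corner_entry[OF two m aut] A by (simp add: v_def)
  have square: "v $ k + v $ k = v $ m * v $ k + (v \<bullet> v) * ?e $ k" if "k < Suc m" for k
    using is_aut_imul_index[OF aut _ _ that, of ?e ?e] by (simp add: v_def del: index_mult_mat_vec)
  have "v \<bullet> v = 1" using square[of m] vm by simp
  then have "v $ k = ?e $ k" if "k < Suc m" for k
    using square[OF that] vm by simp
  then have "v = ?e" using v by (intro eq_vecI) auto
  then show ?thesis by (simp add: v_def)
qed

lemma is_aut_scalar_prod:
  fixes A :: "'a::field mat"
  assumes two: "(2::'a) \<noteq> 0" and m: "0 < m" and aut: "is_aut (Suc m) A"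
    and x: "x \<in> carrier_vec (Suc m)" and y: "y \<in> carrier_vec (Suc m)"
  shows "(A *\<^sub>v x) \<bullet> (A *\<^sub>v y) = x \<bullet> y"
proof -
  let ?e = "unit_vec (Suc m) m"
  have A: "A \<in> carrier_mat (Suc m) (Suc m)" using aut by (simp add: is_aut_def)
  have Ae: "A *\<^sub>v ?e = ?e" by (rule is_aut_mult_unit_vec[OF two m aut])
  have e_component: "x $ m * (A *\<^sub>v y) $ m + x \<bullet> y = (A *\<^sub>v x) $ m * (A *\<^sub>v y) $ m + (A *\<^sub>v x) \<bullet> (A *\<^sub>v y)"
    if "x \<in> carrier_vec (Suc m)" "y \<in> carrier_vec (Suc m)" for x y
    using is_aut_imul_index[OF aut that lessI] A Ae that by (simp del: index_mult_mat_vec)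
  have last_coord: "(A *\<^sub>v z) $ m = z $ m" if "z \<in> carrier_vec (Suc m)" for z
    using e_component[of ?e z] A Ae that by (simp del: index_mult_mat_vec)
  show ?thesis using e_component[OF x y] last_coord[OF x] by simp
qed

lemma is_aut_if_orthogonal:
  fixes A :: "'a::field mat"
  assumes A: "A \<in> carrier_mat (Suc m) (Suc m)" and orth: "transpose_mat A * A = 1\<^sub>m (Suc m)"
    and Ae: "A *\<^sub>v unit_vec (Suc m) m = unit_vec (Suc m) m"
  shows "is_aut (Suc m) A"
proof -
  let ?e = "unit_vec (Suc m)"
  have AT: "A * transpose_mat A = 1\<^sub>m (Suc m)"
    using mat_mult_left_right_inverse[OF _ A orth] A by simp
  have inv: "invertible_mat A"
    unfolding invertible_mat_def inverts_mat_def using A orth AT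
    by (intro conjI exI[of _ "transpose_mat A"]) (auto simp: square_mat.simps)
  have cancel: "transpose_mat A *\<^sub>v (A *\<^sub>v x) = x" if "x \<in> carrier_vec (Suc m)" for x
    using A orth that by (simp flip: assoc_mult_mat_vec)
  have sp: "(A *\<^sub>v x) \<bullet> (A *\<^sub>v y) = x \<bullet> y"
    if "x \<in> carrier_vec (Suc m)" "y \<in> carrier_vec (Suc m)" for x y
    using transpose_vec_mult_scalar[OF A that(2), of "A *\<^sub>v x"] cancel[OF that(1)] A that by simp
  have last_coord: "(A *\<^sub>v x) $ m = x $ m" if "x \<in> carrier_vec (Suc m)" for x
    using transpose_vec_mult_scalar[OF A that, of "?e m"] cancel[of "?e m"] Ae A that by simp
  have "A *\<^sub>v imul (Suc m) x y = imul (Suc m) (A *\<^sub>v x) (A *\<^sub>v y)"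
    if "x \<in> carrier_vec (Suc m)" "y \<in> carrier_vec (Suc m)" for x y
    using mult_mat_vec_imul[OF A that] imul_eq[of "A *\<^sub>v x" m "A *\<^sub>v y"] A that
      sp[OF that] last_coord[OF that(1)] Ae
    by (simp del: index_mult_mat_vec)
  with A inv show ?thesis by (simp add: is_aut_def)
qed

lemma is_aut_iff:
  fixes A :: "'a::field mat"
  assumes two: "(2::'a) \<noteq> 0" and m: "0 < m"
  shows "is_aut (Suc m) A \<longleftrightarrow> A \<in> carrier_mat (Suc m) (Suc m) \<and>
    transpose_mat A * A = 1\<^sub>m (Suc m) \<and> A *\<^sub>v unit_vec (Suc m) m = unit_vec (Suc m) m"
proof
  assume aut: "is_aut (Suc m) A"
  then have A: "A \<in> carrier_mat (Suc m) (Suc m)" by (simp add: is_aut_def)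
  moreover have "transpose_mat A * A = 1\<^sub>m (Suc m)"
    by (rule transpose_mult_self_eq_one_if_scalar_prod_preserved[OF A is_aut_scalar_prod[OF two m aut]])
  ultimately show "A \<in> carrier_mat (Suc m) (Suc m) \<and> transpose_mat A * A = 1\<^sub>m (Suc m) \<and>
      A *\<^sub>v unit_vec (Suc m) m = unit_vec (Suc m) m"
    using is_aut_mult_unit_vec[OF two m aut] by blast
qed (use is_aut_if_orthogonal in blast)

section \<open>Derivations\<close>

lemma is_der_imul_index:
  fixes D :: "'a::field mat"
  assumes der: "is_der (Suc m) D"
    and x: "x \<in> carrier_vec (Suc m)" and y: "y \<in> carrier_vec (Suc m)" and k: "k < Suc m"
  shows "x $ m * (D *\<^sub>v y) $ k + (x \<bullet> y) * (D *\<^sub>v unit_vec (Suc m) m) $ k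
       = (D *\<^sub>v x) $ m * y $ k + ((D *\<^sub>v x) \<bullet> y) * unit_vec (Suc m) m $ k
         + (x $ m * (D *\<^sub>v y) $ k + (x \<bullet> (D *\<^sub>v y)) * unit_vec (Suc m) m $ k)"
proof -
  have D: "D \<in> carrier_mat (Suc m) (Suc m)" using der by (simp add: is_der_def)
  have "x $ m \<cdot>\<^sub>v (D *\<^sub>v y) + (x \<bullet> y) \<cdot>\<^sub>v (D *\<^sub>v unit_vec (Suc m) m) = D *\<^sub>v imul (Suc m) x y"
      (is "?lhs = _")
    using D x y by (simp add: mult_mat_vec_imul)
  also have "\<dots> = imul (Suc m) (D *\<^sub>v x) y + imul (Suc m) x (D *\<^sub>v y)"
    using der x y by (simp add: is_der_def)
  also have "\<dots> = ((D *\<^sub>v x) $ m \<cdot>\<^sub>v y + ((D *\<^sub>v x) \<bullet> y) \<cdot>\<^sub>v unit_vec (Suc m) m)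
         + (x $ m \<cdot>\<^sub>v (D *\<^sub>v y) + (x \<bullet> (D *\<^sub>v y)) \<cdot>\<^sub>v unit_vec (Suc m) m)"
      (is "_ = ?rhs")
    using D x y by (simp add: imul_eq)
  finally have "?lhs = ?rhs" .
  from arg_cong[OF this, of "\<lambda>w. w $ k"] show ?thesis
    using D x y k by (simp del: index_mult_mat_vec)
qed

lemma is_der_imp_skew:
  fixes D :: "'a::field mat"
  assumes two: "(2::'a) \<noteq> 0" and der: "is_der (Suc m) D"
  shows "D *\<^sub>v unit_vec (Suc m) m = 0\<^sub>v (Suc m) \<and> transpose_mat D = - D"
proof -
  let ?e = "unit_vec (Suc m) m"
  have D: "D \<in> carrier_mat (Suc m) (Suc m)" using der by (simp add: is_der_def)
  define w where "w = D *\<^sub>v ?e"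
  have w: "w \<in> carrier_vec (Suc m)" using D by (simp add: w_def)
  \<comment> \<open>differentiating e e = 2 e\<close>
  have w_eq: "w $ k = 3 * w $ m * ?e $ k" if "k < Suc m" for k
    using is_der_imul_index[OF der _ _ that, of ?e ?e] w by (simp add: w_def del: index_mult_mat_vec)
  moreover have "w $ m = 0"
  proof -
    have three: "3 * w $ m = w $ m" using w_eq[of m] by simp
    have "2 * w $ m = 3 * w $ m - w $ m" by (simp add: algebra_simps)
    also have "\<dots> = 0" by (simp only: three diff_self)
    finally show ?thesis using two by simp
  qed
  ultimately have w0: "w = 0\<^sub>v (Suc m)"
    using w by (intro eq_vecI) auto
  have last_coord: "(D *\<^sub>v x) $ m = 0" if "x \<in> carrier_vec (Suc m)" for x
    using is_der_imul_index[OF der that _ lessI, of ?e] w0 two D that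
    by (simp add: w_def del: index_mult_mat_vec)
  have "(D *\<^sub>v x) \<bullet> y + x \<bullet> (D *\<^sub>v y) = 0"
    if "x \<in> carrier_vec (Suc m)" "y \<in> carrier_vec (Suc m)" for x y
    using is_der_imul_index[OF der that lessI] last_coord[OF that(1)] w0 D that
    by (simp add: w_def del: index_mult_mat_vec)
  then have "transpose_mat D = - D"
    by (rule transpose_eq_uminus_if_scalar_prod_skew[OF D])
  with w0 show ?thesis by (simp add: w_def)
qed

lemma is_der_if_skew:
  fixes D :: "'a::field mat"
  assumes D: "D \<in> carrier_mat (Suc m) (Suc m)" and skew: "transpose_mat D = - D"
    and De: "D *\<^sub>v unit_vec (Suc m) m = 0\<^sub>v (Suc m)"
  shows "is_der (Suc m) D"
proof -
  have flip: "x \<bullet> (D *\<^sub>v y) = - ((D *\<^sub>v x) \<bullet> y)"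
    if "x \<in> carrier_vec (Suc m)" "y \<in> carrier_vec (Suc m)" for x y
    using transpose_vec_mult_scalar[OF D that(2,1)] skew D that by simp
  have last_coord: "(D *\<^sub>v x) $ m = 0" if "x \<in> carrier_vec (Suc m)" for x
    using flip[OF unit_vec_carrier that, of m] De D that by simp
  have "D *\<^sub>v imul (Suc m) x y = imul (Suc m) (D *\<^sub>v x) y + imul (Suc m) x (D *\<^sub>v y)"
    if "x \<in> carrier_vec (Suc m)" "y \<in> carrier_vec (Suc m)" for x y
    using mult_mat_vec_imul[OF D that] imul_eq[OF _ that(2), of "D *\<^sub>v x"]
      imul_eq[OF that(1), of "D *\<^sub>v y"] flip[OF that] last_coord[OF that(1)] De D that
    by (intro eq_vecI) (simp_all del: index_mult_mat_vec)
  with D show ?thesis by (simp add: is_der_def)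
qed

lemma is_der_iff:
  fixes D :: "'a::field mat"
  assumes two: "(2::'a) \<noteq> 0"
  shows "is_der (Suc m) D \<longleftrightarrow> D \<in> carrier_mat (Suc m) (Suc m) \<and>
    transpose_mat D = - D \<and> D *\<^sub>v unit_vec (Suc m) m = 0\<^sub>v (Suc m)"
  using is_der_imp_skew[OF two, of m D] is_der_if_skew[of D m] is_der_def[of "Suc m" D] by blast

section \<open>The isomorphisms\<close>

lemma carrier_aut_group_eq_block_ext:
  assumes two: "(2::'a::field) \<noteq> 0" and m: "0 < m"
  shows "carrier (aut_group (Suc m) :: 'a mat monoid) = (\<lambda>Q. block_ext Q 1) ` carrier (orth_group m)"
proof (intro equalityI subsetI)
  let ?e = "unit_vec (Suc m) m :: 'a vec"
  fix A :: "'a mat"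
  assume "A \<in> carrier (aut_group (Suc m))"
  then have A: "A \<in> carrier_mat (Suc m) (Suc m)" and orth: "transpose_mat A * A = 1\<^sub>m (Suc m)"
    and Ae: "A *\<^sub>v ?e = ?e"
    by (simp_all add: aut_group_def is_aut_iff[OF two m])
  have "transpose_mat A *\<^sub>v ?e = (transpose_mat A * A) *\<^sub>v ?e"
    using A by (simp add: Ae)
  then have ATe: "transpose_mat A *\<^sub>v ?e = ?e" using orth by simp
  define Q where "Q = upper_left_block m A"
  have Q: "Q \<in> carrier_mat m m" by (simp add: Q_def)
  have A_eq: "A = block_ext Q 1"
    unfolding Q_def using block_ext_upper_left_block[OF A, of 1] Ae ATe by simp
  have "block_ext (transpose_mat Q * Q) 1 = block_ext (1\<^sub>m m) 1"
    using orth Q by (simp add: A_eq transpose_block_ext mult_block_ext block_ext_one)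
  then have QQ: "transpose_mat Q * Q = 1\<^sub>m m"
    by (rule block_ext_inject) (use Q in auto)
  then have "Q * transpose_mat Q = 1\<^sub>m m"
    using mat_mult_left_right_inverse[OF _ Q] Q by simp
  with Q QQ A_eq show "A \<in> (\<lambda>Q. block_ext Q 1) ` carrier (orth_group m)"
    by (auto simp: orth_group_def)
next
  fix A :: "'a mat"
  assume "A \<in> (\<lambda>Q. block_ext Q 1) ` carrier (orth_group m)"
  then obtain Q where Q: "Q \<in> carrier_mat m m" and QQ: "transpose_mat Q * Q = 1\<^sub>m m"
    and A_eq: "A = block_ext Q 1"
    by (auto simp: orth_group_def)
  have "transpose_mat A * A = 1\<^sub>m (Suc m)"
    using Q QQ by (simp add: A_eq transpose_block_ext mult_block_ext block_ext_one)
  then show "A \<in> carrier (aut_group (Suc m))"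
    using Q by (simp add: aut_group_def is_aut_iff[OF two m] A_eq block_ext_mult_unit_vec)
qed

lemma der_alg_eq_block_ext:
  assumes two: "(2::'a::field) \<noteq> 0"
  shows "(der_alg (Suc m) :: 'a mat set) = (\<lambda>Q. block_ext Q 0) ` orth_lie m"
proof (intro equalityI subsetI)
  let ?e = "unit_vec (Suc m) m :: 'a vec"
  fix D :: "'a mat"
  assume "D \<in> der_alg (Suc m)"
  then have D: "D \<in> carrier_mat (Suc m) (Suc m)" and skew: "transpose_mat D = - D"
    and De: "D *\<^sub>v ?e = 0\<^sub>v (Suc m)"
    by (simp_all add: der_alg_def is_der_iff[OF two])
  have DTe: "transpose_mat D *\<^sub>v ?e = 0\<^sub>v (Suc m)"
    using D De skew by (intro eq_vecI) auto
  have zero: "0 \<cdot>\<^sub>v ?e = 0\<^sub>v (Suc m)" by (intro eq_vecI) auto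
  define Q where "Q = upper_left_block m D"
  have Q: "Q \<in> carrier_mat m m" by (simp add: Q_def)
  have D_eq: "D = block_ext Q 0"
    unfolding Q_def using block_ext_upper_left_block[OF D, of 0] De DTe zero by simp
  have "block_ext (transpose_mat Q) 0 = block_ext (- Q) 0"
    using skew Q by (simp add: D_eq transpose_block_ext uminus_block_ext)
  then have "transpose_mat Q = - Q"
    by (rule block_ext_inject) (use Q in auto)
  with Q D_eq show "D \<in> (\<lambda>Q. block_ext Q 0) ` orth_lie m"
    by (auto simp: orth_lie_def)
next
  fix D :: "'a mat"
  assume "D \<in> (\<lambda>Q. block_ext Q 0) ` orth_lie m"
  then obtain Q where Q: "Q \<in> carrier_mat m m" and skew: "transpose_mat Q = - Q"
    and D_eq: "D = block_ext Q 0"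
    by (auto simp: orth_lie_def)
  have "transpose_mat D = - D"
    using Q skew by (simp add: D_eq transpose_block_ext uminus_block_ext)
  moreover have "D *\<^sub>v unit_vec (Suc m) m = 0\<^sub>v (Suc m)"
    using Q by (intro eq_vecI) (simp_all add: D_eq block_ext_mult_unit_vec)
  ultimately show "D \<in> der_alg (Suc m)"
    using Q by (simp add: der_alg_def is_der_iff[OF two] D_eq)
qed

lemma aut_group_iso_orth_group:
  assumes two: "(2::'a::field) \<noteq> 0" and m: "0 < m"
  shows "(aut_group (Suc m) :: 'a mat monoid) \<cong> (orth_group m :: 'a mat monoid)"
proof -
  have orth: "carrier (orth_group m) \<subseteq> carrier_mat m m"
    by (auto simp: orth_group_def)
  have bij: "bij_betw (upper_left_block m) (carrier (aut_group (Suc m) :: 'a mat monoid)) (carrier (orth_group m))"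
    using bij_betw_upper_left_block[OF orth, of 1] by (simp add: carrier_aut_group_eq_block_ext[OF two m])
  have "upper_left_block m \<in> hom (aut_group (Suc m) :: 'a mat monoid) (orth_group m)"
  proof (rule homI)
    fix A :: "'a mat" assume "A \<in> carrier (aut_group (Suc m))"
    then show "upper_left_block m A \<in> carrier (orth_group m)"
      using bij by (auto simp: bij_betw_def)
  next
    fix A B :: "'a mat" assume "A \<in> carrier (aut_group (Suc m))" "B \<in> carrier (aut_group (Suc m))"
    then obtain Q R where "Q \<in> carrier_mat m m" "R \<in> carrier_mat m m"
      and "A = block_ext Q 1" "B = block_ext R 1"
      using orth unfolding carrier_aut_group_eq_block_ext[OF two m] by blast
    then show "upper_left_block m (A \<otimes>\<^bsub>aut_group (Suc m)\<^esub> B)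
        = upper_left_block m A \<otimes>\<^bsub>orth_group m\<^esub> upper_left_block m B"
      by (simp add: aut_group_def orth_group_def mult_block_ext)
  qed
  then have "upper_left_block m \<in> iso (aut_group (Suc m) :: 'a mat monoid) (orth_group m)"
    using bij by (rule isoI)
  then show ?thesis by (rule is_isoI)
qed

lemma der_alg_lie_isomorphic_orth_lie:
  assumes two: "(2::'a::field) \<noteq> 0"
  shows "lie_isomorphic (der_alg (Suc m) :: 'a mat set) (orth_lie m)"
proof -
  have skew: "orth_lie m \<subseteq> (carrier_mat m m :: 'a mat set)"
    by (auto simp: orth_lie_def)
  have block_form: "\<exists>Q. Q \<in> carrier_mat m m \<and> A = block_ext Q 0" if "A \<in> der_alg (Suc m)" for A :: "'a mat"
    using that skew unfolding der_alg_eq_block_ext[OF two] by blast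
  have bij: "bij_betw (upper_left_block m) (der_alg (Suc m) :: 'a mat set) (orth_lie m)"
    using bij_betw_upper_left_block[OF skew, of 0] by (simp add: der_alg_eq_block_ext[OF two])
  have ops: "upper_left_block m (A + B) = upper_left_block m A + upper_left_block m B \<and>
      upper_left_block m (lie_bracket A B) = lie_bracket (upper_left_block m A) (upper_left_block m B)"
    if AB: "A \<in> der_alg (Suc m)" "B \<in> der_alg (Suc m)" for A B :: "'a mat"
  proof -
    obtain Q R where Q: "Q \<in> carrier_mat m m" and R: "R \<in> carrier_mat m m"
      and A_eq: "A = block_ext Q 0" and B_eq: "B = block_ext R 0"
      using block_form AB by blast
    have QR: "Q * R \<in> carrier_mat m m" "R * Q \<in> carrier_mat m m" "Q * R - R * Q \<in> carrier_mat m m"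
      using Q R by auto
    show ?thesis
      using Q R by (simp add: A_eq B_eq add_block_ext lie_bracket_def mult_block_ext
          minus_block_ext[OF QR(1,2)] QR(3))
  qed
  have scalar: "upper_left_block m (c \<cdot>\<^sub>m A) = c \<cdot>\<^sub>m upper_left_block m A"
    if "A \<in> der_alg (Suc m)" for c and A :: "'a mat"
    using block_form[OF that] by (auto simp: smult_block_ext)
  show ?thesis
    unfolding lie_isomorphic_def using bij ops scalar by blast
qed

theorem theorem1:
  fixes n :: nat
  assumes "(2::'a::field) \<noteq> 0" and "n > 1"
  shows "(aut_group n :: 'a mat monoid) \<cong> (orth_group (n - 1) :: 'a mat monoid)
         \<and> lie_isomorphic (der_alg n :: 'a mat set) (orth_lie (n - 1))"
proof -
  obtain m where n: "n = Suc m" and m: "0 < m"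
    using assms(2) by (cases n) auto
  show ?thesis
    using aut_group_iso_orth_group[OF assms(1) m] der_alg_lie_isomorphic_orth_lie[OF assms(1)]
    by (simp add: n)
qed

end
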